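(* For $q^ip^j\in\mathcal{C}(p,q)$ and $n\in\omega$ let $O_n(q^ip^j)=\{q^ip^j\}\cup\big(\downarrow_{\preceq}q^{i+n}p^{j+n}\setminus\{q^{i+n}p^{j+n}\}\big)$, and let $\tau_2$ be the topology on $\mathcal{C}(p,q)$ generated by the neighbourhood bases $\{O_n(q^ip^j):n\in\omega\}$ at each point. Then $(\mathcal{C}(p,q),\tau_2)$ is a $T_1$ locally compact topological inverse semigroup.
   Context: The bicyclic monoid $\mathcal{C}(p,q)$ is the monoid generated by $p,q$ subject only to $pq=1$; elements are uniquely $q^ip^j$, $i,j\in\omega$, with multiplication $q^kp^l\cdot q^mp^n = q^{k-l+m}p^n$ if $l<m$, $=q^kp^n$ if $l=m$, $=q^kp^{l-m+n}$ if $l>m$, and inversion $(q^ip^j)^{-1}=q^jp^i$. The natural partial order: $q^ip^j\preceq q^sp^t$ iff $i\ge s$ and $i-j=s-t$; $\downarrow_{\preceq}x=\{y:y\preceq x\}$, so $\downarrow_{\preceq}q^ap^b=\{q^{a+k}p^{b+k}:k\in\omega\}$. A topological inverse semigroup is an inverse semigroup with a topology making multiplication jointly continuous and inversion continuous; locally compact means every point has a compact neighbourhood. *)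

theory Defs
  imports "HOL-Analysis.Analysis"
begin

text \<open>The bicyclic monoid C(p,q): the element q^i p^j is represented by the pair (i,j).\<close>

type_synonym bicyclic = "nat \<times> nat"

fun bc_mult :: "bicyclic \<Rightarrow> bicyclic \<Rightarrow> bicyclic" where
  "bc_mult (k, l) (m, n) =
     (if l < m then (k + (m - l), n)
      else if l = m then (k, n)
      else (k, (l - m) + n))"

fun bc_inv :: "bicyclic \<Rightarrow> bicyclic" where
  "bc_inv (i, j) = (j, i)"

fun bc_le :: "bicyclic \<Rightarrow> bicyclic \<Rightarrow> bool" where
  "bc_le (i, j) (s, t) \<longleftrightarrow> i \<ge> s \<and> int i - int j = int s - int t"

definition bc_down :: "bicyclic \<Rightarrow> bicyclic set" where
  "bc_down x = {y. bc_le y x}"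

definition bc_O :: "nat \<Rightarrow> bicyclic \<Rightarrow> bicyclic set" where
  "bc_O n x = {x} \<union> (bc_down (fst x + n, snd x + n) - {(fst x + n, snd x + n)})"

definition tau2 :: "bicyclic topology" where
  "tau2 = topology (\<lambda>U. \<forall>x\<in>U. \<exists>n. bc_O n x \<subseteq> U)"

end

theory Submission
  imports Defs
begin

text \<open>With \<open>bc_shift s (q^i p^j) = q^(i+s) p^(j+s)\<close>, the set \<open>O_n(x)\<close> consists of \<open>x\<close> and its
  shifts by more than \<open>n\<close>; these sets are open and decrease in \<open>n\<close>. Continuity of multiplication
  comes from the identity \<open>shift s a \<cdot> shift t b = shift r (a \<cdot> b)\<close>, where
  \<open>r = max (l + s) (m + t) - max l m\<close> for \<open>a = q^k p^l\<close> and \<open>b = q^m p^n\<close>: shifting a factor far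
  shifts the product far. Inversion commutes with shifting. \<open>O_0(x)\<close> is compact because every
  open set containing \<open>x\<close> misses only finitely many of its points.\<close>

definition bc_shift :: "nat \<Rightarrow> bicyclic \<Rightarrow> bicyclic" where
  "bc_shift s x = (fst x + s, snd x + s)"

lemma bc_shift_0 [simp]: "bc_shift 0 x = x"
  by (simp add: bc_shift_def)

lemma bc_shift_add: "bc_shift t (bc_shift s x) = bc_shift (s + t) x"
  by (simp add: bc_shift_def)

lemma mem_bc_O: "y \<in> bc_O n x \<longleftrightarrow> (\<exists>s. (s = 0 \<or> n < s) \<and> y = bc_shift s x)"
proof -
  have "bc_le y (bc_shift n x) \<and> y \<noteq> bc_shift n x \<longleftrightarrow> (\<exists>s>n. y = bc_shift s x)"
  proof
    assume "bc_le y (bc_shift n x) \<and> y \<noteq> bc_shift n x"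
    then show "\<exists>s>n. y = bc_shift s x"
      by (intro exI[of _ "fst y - fst x"]) (cases x, cases y, auto simp: bc_shift_def)
  qed (auto simp: bc_shift_def)
  then show ?thesis
    unfolding bc_O_def bc_down_def bc_shift_def[symmetric] by (auto intro: exI[of _ 0])
qed

lemma bc_mult_shift:
  "bc_mult (bc_shift s a) (bc_shift t b)
     = bc_shift (max (snd a + s) (fst b + t) - max (snd a) (fst b)) (bc_mult a b)"
  by (cases a, cases b) (auto simp: bc_shift_def max_def)

lemma bc_inv_shift: "bc_inv (bc_shift s x) = bc_shift s (bc_inv x)"
  by (cases x) (simp add: bc_shift_def)

lemma bc_O_antimono: "m \<le> n \<Longrightarrow> bc_O n x \<subseteq> bc_O m x"
  unfolding mem_bc_O subset_iff by (metis le_less_trans)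

lemma istopology_bc_O_nbhds: "istopology (\<lambda>U. \<forall>x\<in>U. \<exists>n. bc_O n x \<subseteq> U)"
  unfolding istopology_def
proof (intro conjI allI impI ballI)
  fix S T x
  assume "\<forall>x\<in>S. \<exists>n. bc_O n x \<subseteq> S" "\<forall>x\<in>T. \<exists>n. bc_O n x \<subseteq> T" "x \<in> S \<inter> T"
  then obtain m n where "bc_O m x \<subseteq> S" "bc_O n x \<subseteq> T"
    by blast
  moreover have "bc_O (max m n) x \<subseteq> bc_O m x" "bc_O (max m n) x \<subseteq> bc_O n x"
    by (simp_all add: bc_O_antimono)
  ultimately show "\<exists>k. bc_O k x \<subseteq> S \<inter> T"
    by blast
next
  fix \<K> x
  assume "\<forall>K\<in>\<K>. \<forall>x\<in>K. \<exists>n. bc_O n x \<subseteq> K" "x \<in> \<Union>\<K>"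
  then show "\<exists>n. bc_O n x \<subseteq> \<Union>\<K>"
    by (meson Union_upper UnionE subset_trans)
qed

lemma openin_tau2: "openin tau2 U \<longleftrightarrow> (\<forall>x\<in>U. \<exists>n. bc_O n x \<subseteq> U)"
  by (simp add: tau2_def istopology_bc_O_nbhds)

lemma topspace_tau2 [simp]: "topspace tau2 = UNIV"
  using openin_subset[of tau2 UNIV] by (auto simp: openin_tau2)

lemma self_in_bc_O [simp]: "x \<in> bc_O n x"
  by (simp add: bc_O_def)

lemma fst_gt_if_in_bc_O: "y \<in> bc_O n x \<Longrightarrow> y \<noteq> x \<Longrightarrow> n < fst y"
  unfolding mem_bc_O bc_shift_def by auto

lemma openin_bc_O: "openin tau2 (bc_O n x)"
  unfolding openin_tau2
proof
  fix y
  assume "y \<in> bc_O n x"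
  then obtain s where s: "s = 0 \<or> n < s" and y: "y = bc_shift s x"
    unfolding mem_bc_O by blast
  show "\<exists>m. bc_O m y \<subseteq> bc_O n x"
  proof (cases "s = 0")
    case True
    then show ?thesis
      using y by (intro exI[of _ n]) simp
  next
    case False
    have "bc_O 0 y \<subseteq> bc_O n x"
    proof
      fix z
      assume "z \<in> bc_O 0 y"
      then obtain t where "z = bc_shift (s + t) x"
        unfolding mem_bc_O y bc_shift_add by blast
      moreover have "n < s + t"
        using s False by simp
      ultimately show "z \<in> bc_O n x"
        unfolding mem_bc_O by blast
    qed
    then show ?thesis ..
  qed
qed

lemma continuous_map_into_tau2I:
  assumes "\<And>x n. x \<in> topspace X \<Longrightarrow> \<exists>U. openin X U \<and> x \<in> U \<and> f ` U \<subseteq> bc_O n (f x)"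
  shows "continuous_map X tau2 f"
  unfolding continuous_map_eq_topcontinuous_at topcontinuous_at_def
proof (intro ballI conjI allI impI)
  fix x V
  assume x: "x \<in> topspace X" and V: "openin tau2 V \<and> f x \<in> V"
  then obtain n where "bc_O n (f x) \<subseteq> V"
    unfolding openin_tau2 by blast
  with assms[OF x, of n] show "\<exists>U. openin X U \<and> x \<in> U \<and> (\<forall>y\<in>U. f y \<in> V)"
    by blast
qed simp_all

lemma bc_mult_bc_O_subset:
  assumes "N + max (snd a) (fst b) \<le> M"
  shows "(\<lambda>(x, y). bc_mult x y) ` (bc_O M a \<times> bc_O M b) \<subseteq> bc_O N (bc_mult a b)"
proof (rule image_subsetI, clarify)
  fix x y
  assume "x \<in> bc_O M a" "y \<in> bc_O M b"
  then obtain s t where s: "s = 0 \<or> M < s" "x = bc_shift s a"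
    and t: "t = 0 \<or> M < t" "y = bc_shift t b"
    unfolding mem_bc_O by blast
  define r where "r = max (snd a + s) (fst b + t) - max (snd a) (fst b)"
  have "r = 0 \<or> N < r"
    using s(1) t(1) assms unfolding r_def by linarith
  then show "bc_mult x y \<in> bc_O N (bc_mult a b)"
    unfolding mem_bc_O s(2) t(2) bc_mult_shift r_def[symmetric] by blast
qed

lemma bc_inv_bc_O_subset: "bc_inv ` bc_O n x \<subseteq> bc_O n (bc_inv x)"
proof (rule image_subsetI)
  fix y
  assume "y \<in> bc_O n x"
  then obtain s where s: "s = 0 \<or> n < s" and "y = bc_shift s x"
    unfolding mem_bc_O by blast
  then have "bc_inv y = bc_shift s (bc_inv x)"
    by (simp add: bc_inv_shift)
  with s show "bc_inv y \<in> bc_O n (bc_inv x)"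
    unfolding mem_bc_O by blast
qed

lemma compactin_if_cofinite_nbhds:
  assumes "K \<subseteq> topspace X" "x \<in> K"
    and "\<And>U. openin X U \<Longrightarrow> x \<in> U \<Longrightarrow> finite (K - U)"
  shows "compactin X K"
  unfolding compactin_def
proof (intro conjI allI impI)
  fix \<U>
  assume \<U>: "(\<forall>U\<in>\<U>. openin X U) \<and> K \<subseteq> \<Union>\<U>"
  then obtain U where U: "U \<in> \<U>" "x \<in> U"
    using assms(2) by blast
  have "compactin X (K - U)"
    using assms U \<U> by (intro finite_imp_compactin) auto
  then obtain \<F> where "finite \<F>" "\<F> \<subseteq> \<U>" "K - U \<subseteq> \<Union>\<F>"
    using \<U> unfolding compactin_def by (meson Diff_subset subset_trans)
  then show "\<exists>\<F>. finite \<F> \<and> \<F> \<subseteq> \<U> \<and> K \<subseteq> \<Union>\<F>"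
    using U by (intro exI[of _ "insert U \<F>"]) auto
qed (fact assms(1))

lemma compactin_bc_O: "compactin tau2 (bc_O 0 x)"
proof (rule compactin_if_cofinite_nbhds)
  fix U
  assume "openin tau2 U" "x \<in> U"
  then obtain N where N: "bc_O N x \<subseteq> U"
    unfolding openin_tau2 by blast
  have "bc_O 0 x - U \<subseteq> (\<lambda>s. bc_shift s x) ` {..N}"
  proof
    fix y
    assume y: "y \<in> bc_O 0 x - U"
    then obtain s where s: "y = bc_shift s x"
      unfolding Diff_iff mem_bc_O by blast
    have "s \<le> N"
    proof (rule ccontr)
      assume "\<not> s \<le> N"
      then have "y \<in> bc_O N x"
        unfolding mem_bc_O s using not_le by blast
      with y N show False
        by blast
    qed
    with s show "y \<in> (\<lambda>s. bc_shift s x) ` {..N}"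
      by simp
  qed
  then show "finite (bc_O 0 x - U)"
    by (rule finite_subset) simp
qed simp_all

lemma t1_space_tau2: "t1_space tau2"
  unfolding t1_space_def
proof (intro ballI impI)
  fix x y :: bicyclic
  assume "x \<noteq> y"
  then have "y \<notin> bc_O (fst y) x"
    using fst_gt_if_in_bc_O by blast
  then show "\<exists>U. openin tau2 U \<and> x \<in> U \<and> y \<notin> U"
    using openin_bc_O self_in_bc_O by blast
qed

lemma locally_compact_space_tau2: "locally_compact_space tau2"
  unfolding locally_compact_space_def
proof
  fix x :: bicyclic
  show "\<exists>U K. openin tau2 U \<and> compactin tau2 K \<and> x \<in> U \<and> U \<subseteq> K"
    by (intro exI[of _ "bc_O 0 x"] conjI order_refl openin_bc_O compactin_bc_O self_in_bc_O)
qed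

lemma continuous_map_bc_mult:
  "continuous_map (prod_topology tau2 tau2) tau2 (\<lambda>(x, y). bc_mult x y)"
proof (rule continuous_map_into_tau2I)
  fix z :: "bicyclic \<times> bicyclic" and n
  obtain a b where z: "z = (a, b)"
    using surj_pair[of z] by blast
  define M where "M = n + max (snd a) (fst b)"
  have "openin (prod_topology tau2 tau2) (bc_O M a \<times> bc_O M b)"
    by (simp add: openin_prod_Times_iff openin_bc_O)
  moreover have "z \<in> bc_O M a \<times> bc_O M b"
    by (simp add: z)
  moreover have "(\<lambda>(x, y). bc_mult x y) ` (bc_O M a \<times> bc_O M b)
      \<subseteq> bc_O n ((\<lambda>(x, y). bc_mult x y) z)"
    unfolding z prod.case by (rule bc_mult_bc_O_subset) (simp add: M_def)
  ultimately show "\<exists>U. openin (prod_topology tau2 tau2) U \<and> z \<in> U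
      \<and> (\<lambda>(x, y). bc_mult x y) ` U \<subseteq> bc_O n ((\<lambda>(x, y). bc_mult x y) z)"
    by blast
qed

lemma continuous_map_bc_inv: "continuous_map tau2 tau2 bc_inv"
proof (rule continuous_map_into_tau2I)
  fix x n
  show "\<exists>U. openin tau2 U \<and> x \<in> U \<and> bc_inv ` U \<subseteq> bc_O n (bc_inv x)"
    by (intro exI[of _ "bc_O n x"] conjI openin_bc_O self_in_bc_O bc_inv_bc_O_subset)
qed

theorem proposition2:
  shows "t1_space tau2
    \<and> locally_compact_space tau2
    \<and> continuous_map (prod_topology tau2 tau2) tau2 (\<lambda>(x, y). bc_mult x y)
    \<and> continuous_map tau2 tau2 bc_inv"
  using t1_space_tau2 locally_compact_space_tau2 continuous_map_bc_mult continuous_map_bc_inv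
  by blast

end
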